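(* Let $(X,d_X)$ and $(Y,d_Y)$ be compact metric spaces and let $f:X\to Y$ be Rakotch contracting. Then the induced map $Pf:(PX,d_{PX})\to(PY,d_{PY})$ is Rakotch contracting.
   Context: For a compact metric space $(X,d_X)$, $PX$ denotes the space of Borel probability measures on $X$ with the metric $d_{PX}(\mu,\eta)=\inf\{\int_{X\times X}d_X(x,y)\,d\lambda:\lambda\in\mathcal B(\mu,\eta)\}$, where $\mathcal B(\mu,\eta)$ is the set of Borel probability measures $\lambda$ on $X\times X$ whose images under the first and second coordinate projections are $\mu$ and $\eta$ respectively. For continuous $f:X\to Y$, $Pf:PX\to PY$ is given by $Pf(\mu)(B)=\mu(f^{-1}(B))$ for Borel $B\subset Y$. A map $g:(X,d_X)\to(Y,d_Y)$ is Rakotch contracting if there is $\varphi:[0,\infty)\to[0,\infty)$ with $d_Y(g(x),g(x'))\le\varphi(d_X(x,x'))$ for all $x,x'$ and $\sup_{a<t<\infty}\varphi(t)/t<1$ for every $a>0$. *)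

theory Defs
  imports "HOL-Probability.Probability"
begin

text \<open>Rakotch contracting map g from (A,dA) to (B,dB).  The condition
  sup_{a<t} phi t / t < 1 is written as: there is c < 1 bounding phi t / t for all t > a.\<close>
definition rakotch_contracting ::
  "'a set \<Rightarrow> ('a \<Rightarrow> 'a \<Rightarrow> real) \<Rightarrow> 'b set \<Rightarrow> ('b \<Rightarrow> 'b \<Rightarrow> real) \<Rightarrow> ('a \<Rightarrow> 'b) \<Rightarrow> bool" where
  "rakotch_contracting A dA B dB g \<longleftrightarrow> g ` A \<subseteq> B \<and>
     (\<exists>\<phi>::real \<Rightarrow> real. (\<forall>t\<ge>0. \<phi> t \<ge> 0) \<and>
        (\<forall>x\<in>A. \<forall>x'\<in>A. dB (g x) (g x') \<le> \<phi> (dA x x')) \<and>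
        (\<forall>a>0. \<exists>c<1. \<forall>t>a. \<phi> t / t \<le> c))"

definition PM :: "'a::metric_space set \<Rightarrow> 'a measure set" where
  "PM X = {\<mu>. prob_space \<mu> \<and> sets \<mu> = sets (restrict_space borel X)}"

definition couplings :: "'a::metric_space set \<Rightarrow> 'a measure \<Rightarrow> 'a measure \<Rightarrow> ('a \<times> 'a) measure set" where
  "couplings X \<mu> \<eta> = {l. prob_space l \<and> sets l = sets (restrict_space borel (X \<times> X)) \<and>
      distr l (restrict_space borel X) fst = \<mu> \<and> distr l (restrict_space borel X) snd = \<eta>}"

definition dP :: "'a::metric_space set \<Rightarrow> 'a measure \<Rightarrow> 'a measure \<Rightarrow> real" where
  "dP X \<mu> \<eta> = Inf ((\<lambda>l. integral\<^sup>L l (\<lambda>p. dist (fst p) (snd p))) ` couplings X \<mu> \<eta>)"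

definition Pmap :: "'b::metric_space set \<Rightarrow> ('a \<Rightarrow> 'b) \<Rightarrow> 'a measure \<Rightarrow> 'b measure" where
  "Pmap Y f \<mu> = distr \<mu> (restrict_space borel Y) f"

end

theory Submission
  imports Defs
begin

(* Let phi witness that f is Rakotch contracting; then f is non-expansive.  For a
   scale s > 0 put K = sup {phi t / t | t > s/2} (ratio_sup), which is < 1.  Distances above
   s/2 shrink by the factor K and distances below s/2 are not increased, so on X
       dist (f x) (f y) \<le> K * dist x y + (1 - K) * s / 2.
   Pushing a coupling of mu and eta forward along f \<times> f gives a coupling of Pf mu and Pf eta,
   so integrating such an affine bound and taking the infimum over couplings yields the same
   affine bound for the transport distance dP.  Choosing s = dP mu eta gives
   dP (Pf mu) (Pf eta) \<le> s * (1 + K) / 2 (rakotch_average), a modulus that is again Rakotch. *)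

abbreviation transport_cost :: "('a::metric_space \<times> 'a) measure \<Rightarrow> real" where
  "transport_cost l \<equiv> integral\<^sup>L l (\<lambda>p. dist (fst p) (snd p))"

lemma compact_finite_nets:
  fixes X :: "'a::metric_space set"
  assumes "compact X"
  obtains K where "\<And>n::nat. finite (K n) \<and> K n \<subseteq> X \<and> X \<subseteq> (\<Union>a\<in>K n. ball a (1 / Suc n))"
proof -
  have "\<forall>e>0. \<exists>k. finite k \<and> k \<subseteq> X \<and> X \<subseteq> (\<Union>a\<in>k. ball a e)"
    using assms by (intro seq_compact_imp_totally_bounded compact_imp_seq_compact)
  then have "\<forall>n::nat. \<exists>k. finite k \<and> k \<subseteq> X \<and> X \<subseteq> (\<Union>a\<in>k. ball a (1 / Suc n))"
    by simp
  then show ?thesis using that by metis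
qed

lemma ball_subset_ball_of_near_center:
  fixes c y :: "'a::metric_space"
  assumes "dist c y < r" "2 * r \<le> e"
  shows "ball c r \<subseteq> ball y e"
proof
  fix w assume "w \<in> ball c r"
  then have "dist y w < r + r"
    using assms(1) dist_triangle[of y w c] by (simp add: dist_commute)
  then show "w \<in> ball y e" using assms(2) by simp
qed

lemma open_Int_Times_countable_rectangles:
  fixes X :: "'a::metric_space set" and Z :: "'b::metric_space set"
  assumes "compact X" "compact Z" "open S"
  obtains I :: "(real \<times> 'a \<times> 'b) set" where "countable I"
    "S \<inter> (X \<times> Z) = (\<Union>(r, a, b)\<in>I. (X \<inter> ball a r) \<times> (Z \<inter> ball b r))"
proof -
  obtain KX where KX: "\<And>n::nat. finite (KX n) \<and> KX n \<subseteq> X \<and> X \<subseteq> (\<Union>a\<in>KX n. ball a (1 / Suc n))"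
    using compact_finite_nets[OF assms(1)] by blast
  obtain KZ where KZ: "\<And>n::nat. finite (KZ n) \<and> KZ n \<subseteq> Z \<and> Z \<subseteq> (\<Union>b\<in>KZ n. ball b (1 / Suc n))"
    using compact_finite_nets[OF assms(2)] by blast
  define I where "I = {(r, a, b). \<exists>n::nat. r = 1 / Suc n \<and> a \<in> KX n \<and> b \<in> KZ n \<and> ball a r \<times> ball b r \<subseteq> S}"
  have sub: "I \<subseteq> (\<lambda>(n, a, b). (1 / real (Suc n), a, b)) ` (SIGMA n:UNIV. KX n \<times> KZ n)"
  proof clarify
    fix r a b assume "(r, a, b) \<in> I"
    then obtain n where "r = 1 / Suc n" "a \<in> KX n" "b \<in> KZ n" unfolding I_def by blast
    then show "(r, a, b) \<in> (\<lambda>(n, a, b). (1 / real (Suc n), a, b)) ` (SIGMA n:UNIV. KX n \<times> KZ n)"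
      by (auto intro!: image_eqI[where x="(n, a, b)"])
  qed
  have cnt: "countable (SIGMA n:UNIV. KX n \<times> KZ n)"
    using KX KZ by (intro countable_SIGMA) (auto intro: countable_finite)
  have I_in_S: "ball a r \<times> ball b r \<subseteq> S" if "(r, a, b) \<in> I" for r a b
    using that unfolding I_def by blast
  have "countable I" by (rule countable_subset[OF sub countable_image[OF cnt]])
  moreover have "S \<inter> (X \<times> Z) = (\<Union>(r, a, b)\<in>I. (X \<inter> ball a r) \<times> (Z \<inter> ball b r))"
  proof
    show "(\<Union>(r, a, b)\<in>I. (X \<inter> ball a r) \<times> (Z \<inter> ball b r)) \<subseteq> S \<inter> (X \<times> Z)"
    proof
      fix p assume "p \<in> (\<Union>(r, a, b)\<in>I. (X \<inter> ball a r) \<times> (Z \<inter> ball b r))"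
      then obtain r a b where "(r, a, b) \<in> I" "p \<in> (X \<inter> ball a r) \<times> (Z \<inter> ball b r)" by blast
      then show "p \<in> S \<inter> (X \<times> Z)" using I_in_S by blast
    qed
    show "S \<inter> (X \<times> Z) \<subseteq> (\<Union>(r, a, b)\<in>I. (X \<inter> ball a r) \<times> (Z \<inter> ball b r))"
    proof
      fix p assume "p \<in> S \<inter> (X \<times> Z)"
      then obtain x z where p: "p = (x, z)" and xz: "(x, z) \<in> S" and x: "x \<in> X" and z: "z \<in> Z"
        by (cases p) auto
      obtain A B where AB: "open A" "open B" "(x, z) \<in> A \<times> B" "A \<times> B \<subseteq> S"
        by (rule open_prod_elim[OF assms(3) xz])
      obtain e1 where "e1 > 0" "ball x e1 \<subseteq> A" using AB(1,3) open_contains_ball by blast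
      moreover obtain e2 where "e2 > 0" "ball z e2 \<subseteq> B" using AB(2,3) open_contains_ball by blast
      ultimately obtain e where e: "e > 0" "ball x e \<subseteq> A" "ball z e \<subseteq> B"
        by (intro that[of "min e1 e2"]) auto
      obtain n :: nat where n: "1 / Suc n < e / 2"
        using e by (metis half_gt_zero nat_approx_posE)
      let ?r = "1 / real (Suc n)"
      obtain a where a: "a \<in> KX n" "dist a x < ?r" using KX[of n] x by auto
      obtain b where b: "b \<in> KZ n" "dist b z < ?r" using KZ[of n] z by auto
      have "2 * ?r \<le> e" using n by simp
      then have "ball a ?r \<subseteq> ball x e" "ball b ?r \<subseteq> ball z e"
        using ball_subset_ball_of_near_center a(2) b(2) by blast+
      then have "ball a ?r \<times> ball b ?r \<subseteq> S" using e AB(4) by blast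
      then have "(?r, a, b) \<in> I" unfolding I_def using a(1) b(1) by blast
      moreover have "(x, z) \<in> (X \<inter> ball a ?r) \<times> (Z \<inter> ball b ?r)" using a b x z by auto
      ultimately show "p \<in> (\<Union>(r, a, b)\<in>I. (X \<inter> ball a r) \<times> (Z \<inter> ball b r))"
        unfolding p by (intro UN_I[where a="(?r, a, b)"]) auto
    qed
  qed
  ultimately show ?thesis using that by blast
qed

lemma measurable_restrict_borel_continuous:
  assumes "sets M = sets (restrict_space borel A)" "continuous_on A h" "h ` A \<subseteq> B"
  shows "h \<in> measurable M (restrict_space borel B)"
proof -
  have "h \<in> measurable (restrict_space borel A) (restrict_space borel B)"
  proof (rule measurable_restrict_space2)
    show "h \<in> space (restrict_space borel A) \<rightarrow> B" using assms(3) by (auto simp: space_restrict_space)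
    show "h \<in> borel_measurable (restrict_space borel A)"
      by (rule borel_measurable_continuous_on_restrict[OF assms(2)])
  qed
  then show ?thesis by (simp add: measurable_cong_sets[OF assms(1) refl])
qed

text \<open>On a product of compact sets, the Borel sets of the product are exactly the product
  sigma-algebra of the Borel sets of the factors (compact metric spaces are separable).\<close>
lemma sets_pair_restrict_borel_compact:
  fixes X :: "'a::metric_space set" and Z :: "'b::metric_space set"
  assumes "compact X" "compact Z"
  shows "sets (restrict_space borel X \<Otimes>\<^sub>M restrict_space borel Z) = sets (restrict_space borel (X \<times> Z))"
    (is "sets ?P = sets ?Q")
proof -
  have space_eq: "space ?P = space ?Q" by (simp add: space_pair_measure space_restrict_space)
  have "fst \<in> measurable ?Q (restrict_space borel X)" "snd \<in> measurable ?Q (restrict_space borel Z)"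
    by (auto intro!: measurable_restrict_borel_continuous continuous_intros)
  from measurable_Pair[OF this] have Q_to_P: "(\<lambda>p. p) \<in> measurable ?Q ?P"
    by simp
  have P_to_Q: "(\<lambda>p. p) \<in> measurable ?P ?Q"
  proof (rule measurable_restrict_space2)
    show "(\<lambda>p. p) \<in> space ?P \<rightarrow> X \<times> Z" by (simp add: space_pair_measure space_restrict_space)
    show "(\<lambda>p. p) \<in> borel_measurable ?P"
    proof (rule borel_measurableI)
      fix S :: "('a \<times> 'b) set" assume "open S"
      then obtain I :: "(real \<times> 'a \<times> 'b) set" where I: "countable I"
        "S \<inter> (X \<times> Z) = (\<Union>(r, a, b)\<in>I. (X \<inter> ball a r) \<times> (Z \<inter> ball b r))"
        using open_Int_Times_countable_rectangles[OF assms] by blast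
      have "(X \<inter> ball a r) \<times> (Z \<inter> ball b r) \<in> sets ?P" for r a b
        by (intro pair_measureI) (auto simp: sets_restrict_space)
      then have "S \<inter> (X \<times> Z) \<in> sets ?P"
        unfolding I(2) using I(1) by (intro sets.countable_UN') auto
      then show "(\<lambda>p. p) -` S \<inter> space ?P \<in> sets ?P"
        by (simp add: space_pair_measure space_restrict_space)
    qed
  qed
  have "A \<in> sets ?Q" if "A \<in> sets ?P" for A
    using measurable_sets[OF Q_to_P that] sets.sets_into_space[OF that] space_eq
    by (simp add: Int_absorb2)
  moreover have "A \<in> sets ?P" if "A \<in> sets ?Q" for A
    using measurable_sets[OF P_to_Q that] sets.sets_into_space[OF that] space_eq
    by (simp add: Int_absorb2)
  ultimately show ?thesis by blast
qed

lemma integrable_continuous_on_compact: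
  fixes h :: "'a::metric_space \<Rightarrow> real"
  assumes "prob_space M" "sets M = sets (restrict_space borel A)" "compact A" "continuous_on A h"
  shows "integrable M h"
proof -
  interpret prob_space M by fact
  obtain B where B: "\<forall>x\<in>A. norm (h x) \<le> B"
    using compact_imp_bounded[OF compact_continuous_image[OF assms(4,3)]]
    by (auto simp: bounded_iff)
  have "space M = A" using sets_eq_imp_space_eq[OF assms(2)] by (simp add: space_restrict_space)
  moreover have "h \<in> borel_measurable M"
    using borel_measurable_continuous_on_restrict[OF assms(4)]
    by (simp add: measurable_cong_sets[OF assms(2) refl])
  ultimately show ?thesis using B by (intro integrable_const_bound[where B=B]) auto
qed

lemma (in prob_space) distr_pair_snd:
  assumes "sigma_finite_measure N"
  shows "distr (M \<Otimes>\<^sub>M N) N snd = N"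
proof (intro measure_eqI)
  fix A assume A: "A \<in> sets (distr (M \<Otimes>\<^sub>M N) N snd)"
  then have "emeasure (distr (M \<Otimes>\<^sub>M N) N snd) A = emeasure (M \<Otimes>\<^sub>M N) (space M \<times> A)"
    by (auto simp add: emeasure_distr space_pair_measure dest: sets.sets_into_space
        intro!: arg_cong2[where f=emeasure])
  with A show "emeasure (distr (M \<Otimes>\<^sub>M N) N snd) A = emeasure N A"
    by (simp add: sigma_finite_measure.emeasure_pair_measure_Times[OF assms sets.top] emeasure_space_1)
qed simp

text \<open>On a compact space the product measure is a coupling, so the set of couplings defining
  dP is never empty.\<close>
lemma product_coupling:
  fixes X :: "'a::metric_space set"
  assumes "compact X" "\<mu> \<in> PM X" "\<eta> \<in> PM X"
  shows "\<mu> \<Otimes>\<^sub>M \<eta> \<in> couplings X \<mu> \<eta>"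
proof -
  have mu: "prob_space \<mu>" "sets \<mu> = sets (restrict_space borel X)"
    and eta: "prob_space \<eta>" "sets \<eta> = sets (restrict_space borel X)"
    using assms by (auto simp: PM_def)
  interpret mu: prob_space \<mu> by fact
  interpret eta: prob_space \<eta> by fact
  have "sets (\<mu> \<Otimes>\<^sub>M \<eta>) = sets (restrict_space borel (X \<times> X))"
    using sets_pair_restrict_borel_compact[OF assms(1,1)] sets_pair_measure_cong[OF mu(2) eta(2)]
    by simp
  moreover have "distr (\<mu> \<Otimes>\<^sub>M \<eta>) (restrict_space borel X) fst = \<mu>"
    using eta.distr_pair_fst distr_cong[OF refl mu(2)[symmetric], of "\<mu> \<Otimes>\<^sub>M \<eta>" fst] by simp
  moreover have "distr (\<mu> \<Otimes>\<^sub>M \<eta>) (restrict_space borel X) snd = \<eta>"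
    using mu.distr_pair_snd[OF eta.sigma_finite_measure_axioms]
      distr_cong[OF refl eta(2)[symmetric], of "\<mu> \<Otimes>\<^sub>M \<eta>" snd] by simp
  ultimately show ?thesis
    unfolding couplings_def using prob_space_pair[OF mu(1) eta(1)] by auto
qed

lemma dP_nonneg:
  fixes X :: "'a::metric_space set"
  assumes "compact X" "\<mu> \<in> PM X" "\<eta> \<in> PM X"
  shows "0 \<le> dP X \<mu> \<eta>"
  unfolding dP_def using product_coupling[OF assms] by (intro cInf_greatest) auto

lemma dP_le_transport_cost:
  fixes Y :: "'b::metric_space set"
  assumes "l \<in> couplings Y \<nu> \<nu>'"
  shows "dP Y \<nu> \<nu>' \<le> transport_cost l"
  unfolding dP_def
  by (rule cInf_lower) (use assms in \<open>auto intro!: bdd_belowI[where m=0]\<close>)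

lemma Pmap_in_PM:
  assumes "continuous_on X f" "f ` X \<subseteq> Y" "\<mu> \<in> PM X"
  shows "Pmap Y f \<mu> \<in> PM Y"
proof -
  have mu: "prob_space \<mu>" "sets \<mu> = sets (restrict_space borel X)"
    using assms(3) by (auto simp: PM_def)
  then show ?thesis
    using prob_space.prob_space_distr[OF mu(1) measurable_restrict_borel_continuous[OF mu(2) assms(1,2)]]
    by (auto simp: PM_def Pmap_def)
qed

lemma continuous_on_map_prod_square:
  assumes "continuous_on X f"
  shows "continuous_on (X \<times> X) (map_prod f f)"
proof -
  have "continuous_on (X \<times> X) (\<lambda>p. (f (fst p), f (snd p)))"
    by (intro continuous_on_Pair continuous_on_compose2[OF assms]) (auto intro: continuous_intros)
  then show ?thesis by (simp add: map_prod_def case_prod_beta')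
qed

lemma push_coupling:
  fixes X :: "'a::metric_space set" and Y :: "'b::metric_space set"
  assumes "continuous_on X f" "f ` X \<subseteq> Y" "l \<in> couplings X \<mu> \<eta>"
  shows "distr l (restrict_space borel (Y \<times> Y)) (map_prod f f) \<in> couplings Y (Pmap Y f \<mu>) (Pmap Y f \<eta>)"
proof -
  let ?BX = "restrict_space borel X" and ?BY = "restrict_space borel Y"
  let ?BYY = "restrict_space borel (Y \<times> Y)"
  let ?l' = "distr l ?BYY (map_prod f f)"
  have l: "prob_space l" "sets l = sets (restrict_space borel (X \<times> X))"
    "distr l ?BX fst = \<mu>" "distr l ?BX snd = \<eta>"
    using assms(3) by (auto simp: couplings_def)
  have ff: "map_prod f f \<in> measurable l ?BYY"
    using assms(2) by (intro measurable_restrict_borel_continuous[OF l(2)]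
        continuous_on_map_prod_square[OF assms(1)]) auto
  have f: "f \<in> measurable ?BX ?BY" by (rule measurable_restrict_borel_continuous[OF refl assms(1,2)])
  have proj: "fst \<in> measurable l ?BX" "snd \<in> measurable l ?BX"
    "fst \<in> measurable ?BYY ?BY" "snd \<in> measurable ?BYY ?BY"
    by (auto intro!: measurable_restrict_borel_continuous[OF l(2)]
        measurable_restrict_borel_continuous[OF refl] continuous_intros)
  have "distr ?l' ?BY fst = distr l ?BY (f \<circ> fst)"
    using distr_distr[OF proj(3) ff] by (simp add: comp_def)
  also have "\<dots> = Pmap Y f \<mu>"
    using distr_distr[OF f proj(1)] l(3) by (simp add: Pmap_def)
  finally have "distr ?l' ?BY fst = Pmap Y f \<mu>" .
  moreover have "distr ?l' ?BY snd = distr l ?BY (f \<circ> snd)"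
    using distr_distr[OF proj(4) ff] by (simp add: comp_def)
  moreover have "\<dots> = Pmap Y f \<eta>"
    using distr_distr[OF f proj(2)] l(4) by (simp add: Pmap_def)
  ultimately show ?thesis
    unfolding couplings_def using prob_space.prob_space_distr[OF l(1) ff] by auto
qed

lemma transport_cost_push_le:
  fixes X :: "'a::metric_space set" and Y :: "'b::metric_space set"
  assumes "compact X" "continuous_on X f" "f ` X \<subseteq> Y" "l \<in> couplings X \<mu> \<eta>"
    and bound: "\<forall>x\<in>X. \<forall>y\<in>X. dist (f x) (f y) \<le> k * dist x y + b"
  shows "transport_cost (distr l (restrict_space borel (Y \<times> Y)) (map_prod f f))
           \<le> k * transport_cost l + b"
proof -
  have l: "prob_space l" "sets l = sets (restrict_space borel (X \<times> X))"
    using assms(4) by (auto simp: couplings_def)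
  interpret prob_space l by fact
  have space: "space l = X \<times> X"
    using sets_eq_imp_space_eq[OF l(2)] by (simp add: space_restrict_space)
  have compact_square: "compact (X \<times> X)" using compact_Times[OF assms(1,1)] .
  have ff: "map_prod f f \<in> measurable l (restrict_space borel (Y \<times> Y))"
    using assms(3) by (intro measurable_restrict_borel_continuous[OF l(2)]
        continuous_on_map_prod_square[OF assms(2)]) auto
  have cost: "integrable l (\<lambda>p. dist (fst p) (snd p))"
    by (rule integrable_continuous_on_compact[OF l compact_square]) (intro continuous_intros)
  have "continuous_on (X \<times> X) (\<lambda>p. dist (f (fst p)) (f (snd p)))"
    by (intro continuous_on_dist continuous_on_compose2[OF assms(2)]) (auto intro: continuous_intros)
  then have push_cost: "integrable l (\<lambda>p. dist (f (fst p)) (f (snd p)))"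
    by (rule integrable_continuous_on_compact[OF l compact_square])
  have dist_measurable: "(\<lambda>p. dist (fst p) (snd p)) \<in> borel_measurable (restrict_space borel (Y \<times> Y))"
    by (intro borel_measurable_continuous_on_restrict continuous_intros)
  have "transport_cost (distr l (restrict_space borel (Y \<times> Y)) (map_prod f f))
      = (\<integral>p. dist (f (fst p)) (f (snd p)) \<partial>l)"
    unfolding integral_distr[OF ff dist_measurable] by (simp add: map_prod_def case_prod_beta')
  also have "\<dots> \<le> (\<integral>p. k * dist (fst p) (snd p) + b \<partial>l)"
    using push_cost cost bound space by (intro integral_mono) auto
  also have "\<dots> = k * transport_cost l + b"
    using cost by (simp add: prob_space)
  finally show ?thesis .
qed

lemma dP_Pmap_affine_bound:
  fixes X :: "'a::metric_space set" and Y :: "'b::metric_space set"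
  assumes "compact X" "continuous_on X f" "f ` X \<subseteq> Y" "\<mu> \<in> PM X" "\<eta> \<in> PM X" "k \<ge> 0"
    and bound: "\<forall>x\<in>X. \<forall>y\<in>X. dist (f x) (f y) \<le> k * dist x y + b"
  shows "dP Y (Pmap Y f \<mu>) (Pmap Y f \<eta>) \<le> k * dP X \<mu> \<eta> + b"
proof -
  have by_coupling: "dP Y (Pmap Y f \<mu>) (Pmap Y f \<eta>) \<le> k * transport_cost l + b"
    if l: "l \<in> couplings X \<mu> \<eta>" for l
    using dP_le_transport_cost[OF push_coupling[OF assms(2,3) l]]
      transport_cost_push_le[OF assms(1-3) l bound] by linarith
  have nonempty: "couplings X \<mu> \<eta> \<noteq> {}" using product_coupling[OF assms(1,4,5)] by blast
  show ?thesis
  proof (cases "k = 0")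
    case True
    then show ?thesis using by_coupling nonempty by fastforce
  next
    case False
    with assms(6) have k: "k > 0" by simp
    have "(dP Y (Pmap Y f \<mu>) (Pmap Y f \<eta>) - b) / k \<le> dP X \<mu> \<eta>"
      unfolding dP_def[of X] using nonempty
      by (intro cInf_greatest) (auto simp: pos_divide_le_eq[OF k] mult.commute dest!: by_coupling)
    then show ?thesis using k by (simp add: pos_divide_le_eq mult.commute)
  qed
qed

definition rakotch_function :: "(real \<Rightarrow> real) \<Rightarrow> bool" where
  "rakotch_function \<phi> \<longleftrightarrow> (\<forall>t\<ge>0. \<phi> t \<ge> 0) \<and> (\<forall>a>0. \<exists>c<1. \<forall>t>a. \<phi> t / t \<le> c)"

lemma rakotch_contracting_iff:
  "rakotch_contracting A dA B dB g \<longleftrightarrow> g ` A \<subseteq> B \<and>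
     (\<exists>\<phi>. rakotch_function \<phi> \<and> (\<forall>x\<in>A. \<forall>x'\<in>A. dB (g x) (g x') \<le> \<phi> (dA x x')))"
  unfolding rakotch_contracting_def rakotch_function_def by blast

lemma rakotch_lipschitz:
  assumes "rakotch_function \<phi>" and control: "\<forall>x\<in>X. \<forall>y\<in>X. dist (f x) (f y) \<le> \<phi> (dist x y)"
  shows "1-lipschitz_on X f"
proof (rule lipschitz_onI)
  fix x y assume xy: "x \<in> X" "y \<in> X"
  show "dist (f x) (f y) \<le> 1 * dist x y"
  proof (cases "x = y")
    case False
    then have d: "dist x y > 0" by simp
    then obtain c where "c < 1" "\<forall>t > dist x y / 2. \<phi> t / t \<le> c"
      using assms(1) unfolding rakotch_function_def by (meson half_gt_zero)
    then have "\<phi> (dist x y) \<le> c * dist x y" using d by (simp add: divide_le_eq)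
    also have "\<dots> \<le> dist x y" using \<open>c < 1\<close> mult_right_mono[of c 1 "dist x y"] by simp
    finally show ?thesis using control xy by force
  qed simp
qed simp

definition ratio_sup :: "(real \<Rightarrow> real) \<Rightarrow> real \<Rightarrow> real" where
  "ratio_sup \<phi> a = (SUP t\<in>{a<..}. \<phi> t / t)"

lemma ratio_sup_upper:
  assumes "\<forall>t>a. \<phi> t / t \<le> c" "t > a"
  shows "\<phi> t / t \<le> ratio_sup \<phi> a"
  unfolding ratio_sup_def using assms by (intro cSUP_upper bdd_aboveI2[where M=c]) auto

lemma ratio_sup_le:
  assumes "\<forall>t>a. \<phi> t / t \<le> c" "a \<le> a'"
  shows "ratio_sup \<phi> a' \<le> c"
  unfolding ratio_sup_def using assms by (intro cSUP_least) auto

lemma ratio_sup_bounds: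
  assumes "rakotch_function \<phi>" "0 < a"
  shows "0 \<le> ratio_sup \<phi> a" "ratio_sup \<phi> a < 1" "\<And>t. t > a \<Longrightarrow> \<phi> t / t \<le> ratio_sup \<phi> a"
proof -
  obtain c where c: "c < 1" "\<forall>t>a. \<phi> t / t \<le> c"
    using assms unfolding rakotch_function_def by blast
  show "\<phi> t / t \<le> ratio_sup \<phi> a" if "t > a" for t by (rule ratio_sup_upper[OF c(2) that])
  have "0 \<le> \<phi> (a + 1) / (a + 1)"
    using assms unfolding rakotch_function_def by simp
  also have "\<dots> \<le> ratio_sup \<phi> a" by (rule ratio_sup_upper[OF c(2)]) simp
  finally show "0 \<le> ratio_sup \<phi> a" .
  show "ratio_sup \<phi> a < 1" using ratio_sup_le[OF c(2) order_refl] c(1) by linarith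
qed

definition rakotch_average :: "(real \<Rightarrow> real) \<Rightarrow> real \<Rightarrow> real" where
  "rakotch_average \<phi> s = (if s \<le> 0 then 0 else s * (1 + ratio_sup \<phi> (s / 2)) / 2)"

text \<open>The averaged modulus is again a Rakotch function: beyond a its ratio is at most (1 + c) / 2
  when c bounds the ratio of phi beyond a / 2.\<close>
lemma rakotch_function_average:
  assumes "rakotch_function \<phi>"
  shows "rakotch_function (rakotch_average \<phi>)"
  unfolding rakotch_function_def
proof (intro conjI allI impI)
  show "0 \<le> rakotch_average \<phi> t" if "0 \<le> t" for t
    using ratio_sup_bounds(1)[OF assms, of "t / 2"] that by (auto simp: rakotch_average_def)
  fix a :: real assume a: "a > 0"
  obtain c where c: "c < 1" "\<forall>t > a / 2. \<phi> t / t \<le> c"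
    using assms a unfolding rakotch_function_def by (meson half_gt_zero)
  have "rakotch_average \<phi> t / t \<le> (1 + c) / 2" if "t > a" for t
    using ratio_sup_le[OF c(2), of "t / 2"] that a by (simp add: rakotch_average_def)
  then show "\<exists>c'<1. \<forall>t>a. rakotch_average \<phi> t / t \<le> c'"
    using c(1) by (intro exI[of _ "(1 + c) / 2"]) auto
qed

text \<open>The key estimate at scale s > 0: distances above s/2 shrink by the ratio bound K,
  smaller ones are at most s/2, so every distortion is below K * d + (1 - K) * s / 2.\<close>
lemma rakotch_affine_estimate:
  fixes u v :: "'b::metric_space" and x y :: "'a::metric_space"
  assumes "rakotch_function \<phi>" "0 < s"
    and control: "dist u v \<le> \<phi> (dist x y)" and nonexpansive: "dist u v \<le> dist x y"
  shows "dist u v \<le> ratio_sup \<phi> (s / 2) * dist x y + (1 - ratio_sup \<phi> (s / 2)) * s / 2"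
proof -
  let ?K = "ratio_sup \<phi> (s / 2)"
  have K: "?K < 1" "\<And>t. t > s / 2 \<Longrightarrow> \<phi> t / t \<le> ?K"
    using ratio_sup_bounds(2,3)[OF assms(1)] assms(2) by auto
  show ?thesis
  proof (cases "dist x y \<le> s / 2")
    case True
    have "dist u v \<le> ?K * dist x y + (1 - ?K) * dist x y" using nonexpansive by (simp add: algebra_simps)
    also have "\<dots> \<le> ?K * dist x y + (1 - ?K) * (s / 2)"
      using True K(1) by (intro add_left_mono mult_left_mono) auto
    finally show ?thesis by simp
  next
    case False
    then have "dist x y > 0" using assms(2) by linarith
    with K(2) False have "\<phi> (dist x y) \<le> ?K * dist x y" by (simp add: divide_le_eq)
    moreover have "0 \<le> (1 - ?K) * s / 2" using K(1) assms(2) by simp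
    ultimately show ?thesis using control by linarith
  qed
qed

lemma dP_Pmap_le_rakotch_average:
  fixes X :: "'a::metric_space set" and Y :: "'b::metric_space set"
  assumes "compact X" "f ` X \<subseteq> Y" "rakotch_function \<phi>"
    and control: "\<forall>x\<in>X. \<forall>y\<in>X. dist (f x) (f y) \<le> \<phi> (dist x y)"
    and "\<mu> \<in> PM X" "\<eta> \<in> PM X"
  shows "dP Y (Pmap Y f \<mu>) (Pmap Y f \<eta>) \<le> rakotch_average \<phi> (dP X \<mu> \<eta>)"
proof -
  have lip: "1-lipschitz_on X f" by (rule rakotch_lipschitz[OF assms(3) control])
  note affine_bound = dP_Pmap_affine_bound[OF assms(1) lipschitz_on_continuous_on[OF lip] assms(2,5,6)]
  define s where "s = dP X \<mu> \<eta>"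
  have "0 \<le> s" unfolding s_def by (rule dP_nonneg[OF assms(1,5,6)])
  show ?thesis
  proof (cases "s = 0")
    case True
    have "dP Y (Pmap Y f \<mu>) (Pmap Y f \<eta>) \<le> 1 * dP X \<mu> \<eta> + 0"
      using lipschitz_onD[OF lip] by (intro affine_bound) auto
    then show ?thesis using True by (simp add: s_def rakotch_average_def)
  next
    case False
    with \<open>0 \<le> s\<close> have s: "s > 0" by simp
    let ?K = "ratio_sup \<phi> (s / 2)"
    have "dP Y (Pmap Y f \<mu>) (Pmap Y f \<eta>) \<le> ?K * dP X \<mu> \<eta> + (1 - ?K) * s / 2"
      using ratio_sup_bounds(1)[OF assms(3)] s control lipschitz_onD[OF lip]
      by (intro affine_bound ballI rakotch_affine_estimate[OF assms(3) s]) auto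
    also have "\<dots> = rakotch_average \<phi> s"
      using s by (simp add: rakotch_average_def s_def[symmetric] field_simps)
    finally show ?thesis by (simp add: s_def)
  qed
qed

theorem lemma2p1:
  fixes X :: "'a::metric_space set" and Y :: "'b::metric_space set" and f :: "'a \<Rightarrow> 'b"
  assumes "compact X" and "compact Y"
    and "rakotch_contracting X dist Y dist f"
  shows "rakotch_contracting (PM X) (dP X) (PM Y) (dP Y) (Pmap Y f)"
proof -
  obtain \<phi> where fXY: "f ` X \<subseteq> Y" and \<phi>: "rakotch_function \<phi>"
    and control: "\<forall>x\<in>X. \<forall>y\<in>X. dist (f x) (f y) \<le> \<phi> (dist x y)"
    using assms(3) unfolding rakotch_contracting_iff by blast
  have "continuous_on X f"
    by (rule lipschitz_on_continuous_on[OF rakotch_lipschitz[OF \<phi> control]])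
  then have "Pmap Y f ` PM X \<subseteq> PM Y" using Pmap_in_PM[OF _ fXY] by blast
  moreover have "rakotch_function (rakotch_average \<phi>)" by (rule rakotch_function_average[OF \<phi>])
  moreover have "\<forall>\<mu>\<in>PM X. \<forall>\<eta>\<in>PM X. dP Y (Pmap Y f \<mu>) (Pmap Y f \<eta>) \<le> rakotch_average \<phi> (dP X \<mu> \<eta>)"
    using dP_Pmap_le_rakotch_average[OF assms(1) fXY \<phi> control] by blast
  ultimately show ?thesis unfolding rakotch_contracting_iff by blast
qed

end
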